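(* Let $S$ be a topological semigroup having an open left unit or an open right unit. Then (1) $S$ is completely regular iff $S$ is regular iff $S$ is semiregular; (2) $S$ is functionally Hausdorff iff $S$ is Hausdorff iff $S$ is semi-Hausdorff.
   Context: A topological semigroup is a topological space with a continuous associative multiplication. $e\in S$ is a left unit if $ex=x$ for all $x$, a right unit if $xe=x$ for all $x$; a left unit $e$ is an open left unit if $Ux$ is a neighborhood of $x$ for every neighborhood $U$ of $e$ and every $x\in S$; a right unit $e$ is an open right unit if $xU$ is a neighborhood of $x$ for every neighborhood $U$ of $e$ and every $x$. Separation axioms (no $T_1$ assumed): regular: each neighborhood $O_x$ of $x$ contains $\overline{U_x}$ for some neighborhood $U_x$ of $x$; semiregular: each $O_x$ contains $\mathrm{int}\,\overline{U_x}$ for some neighborhood $U_x$; completely regular: for each $O_x$ there is continuous $f:S\to[0,1]$ with $f(x)=0$, $f^{-1}([0,1))\subset O_x$; Hausdorff: for distinct $x,y$ some neighborhood $U_x$ of $x$ has $y\notin\overline{U_x}$; semi-Hausdorff: for distinct $x,y$ some neighborhood $U_x$ has $y\notin\mathrm{int}\,\overline{U_x}$; functionally Hausdorff: distinct points are separated by a continuous function to $[0,1]$. *)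

theory Defs
  imports "HOL-Analysis.Analysis"
begin

definition topological_semigroup :: "'a topology \<Rightarrow> ('a \<Rightarrow> 'a \<Rightarrow> 'a) \<Rightarrow> bool" where
  "topological_semigroup X m \<longleftrightarrow>
     (\<forall>x\<in>topspace X. \<forall>y\<in>topspace X. m x y \<in> topspace X) \<and>
     (\<forall>x\<in>topspace X. \<forall>y\<in>topspace X. \<forall>z\<in>topspace X. m (m x y) z = m x (m y z)) \<and>
     continuous_map (prod_topology X X) X (\<lambda>p. m (fst p) (snd p))"

definition nbhd :: "'a topology \<Rightarrow> 'a \<Rightarrow> 'a set \<Rightarrow> bool" where
  "nbhd X x U \<longleftrightarrow> U \<subseteq> topspace X \<and> x \<in> X interior_of U"

definition left_unit :: "'a topology \<Rightarrow> ('a \<Rightarrow> 'a \<Rightarrow> 'a) \<Rightarrow> 'a \<Rightarrow> bool" where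
  "left_unit X m e \<longleftrightarrow> e \<in> topspace X \<and> (\<forall>x\<in>topspace X. m e x = x)"

definition right_unit :: "'a topology \<Rightarrow> ('a \<Rightarrow> 'a \<Rightarrow> 'a) \<Rightarrow> 'a \<Rightarrow> bool" where
  "right_unit X m e \<longleftrightarrow> e \<in> topspace X \<and> (\<forall>x\<in>topspace X. m x e = x)"

definition open_left_unit :: "'a topology \<Rightarrow> ('a \<Rightarrow> 'a \<Rightarrow> 'a) \<Rightarrow> 'a \<Rightarrow> bool" where
  "open_left_unit X m e \<longleftrightarrow> left_unit X m e \<and>
     (\<forall>U x. nbhd X e U \<longrightarrow> x \<in> topspace X \<longrightarrow> nbhd X x ((\<lambda>u. m u x) ` U))"

definition open_right_unit :: "'a topology \<Rightarrow> ('a \<Rightarrow> 'a \<Rightarrow> 'a) \<Rightarrow> 'a \<Rightarrow> bool" where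
  "open_right_unit X m e \<longleftrightarrow> right_unit X m e \<and>
     (\<forall>U x. nbhd X e U \<longrightarrow> x \<in> topspace X \<longrightarrow> nbhd X x ((\<lambda>u. m x u) ` U))"

text \<open>Separation axioms exactly as in the paper (no T1 assumed).\<close>
definition regular_sp :: "'a topology \<Rightarrow> bool" where
  "regular_sp X \<longleftrightarrow> (\<forall>x W. x \<in> topspace X \<longrightarrow> nbhd X x W \<longrightarrow>
     (\<exists>U. nbhd X x U \<and> X closure_of U \<subseteq> W))"

definition semiregular_sp :: "'a topology \<Rightarrow> bool" where
  "semiregular_sp X \<longleftrightarrow> (\<forall>x W. x \<in> topspace X \<longrightarrow> nbhd X x W \<longrightarrow>
     (\<exists>U. nbhd X x U \<and> X interior_of (X closure_of U) \<subseteq> W))"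

definition completely_regular_sp :: "'a topology \<Rightarrow> bool" where
  "completely_regular_sp X \<longleftrightarrow> (\<forall>x W. x \<in> topspace X \<longrightarrow> nbhd X x W \<longrightarrow>
     (\<exists>f :: 'a \<Rightarrow> real. continuous_map X (top_of_set {0..1}) f \<and> f x = 0 \<and>
        {y \<in> topspace X. f y \<in> {0..<1}} \<subseteq> W))"

definition hausdorff_sp :: "'a topology \<Rightarrow> bool" where
  "hausdorff_sp X \<longleftrightarrow> (\<forall>x\<in>topspace X. \<forall>y\<in>topspace X. x \<noteq> y \<longrightarrow>
     (\<exists>U. nbhd X x U \<and> y \<notin> X closure_of U))"

definition semi_hausdorff_sp :: "'a topology \<Rightarrow> bool" where
  "semi_hausdorff_sp X \<longleftrightarrow> (\<forall>x\<in>topspace X. \<forall>y\<in>topspace X. x \<noteq> y \<longrightarrow>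
     (\<exists>U. nbhd X x U \<and> y \<notin> X interior_of (X closure_of U)))"

definition functionally_hausdorff_sp :: "'a topology \<Rightarrow> bool" where
  "functionally_hausdorff_sp X \<longleftrightarrow> (\<forall>x\<in>topspace X. \<forall>y\<in>topspace X. x \<noteq> y \<longrightarrow>
     (\<exists>f :: 'a \<Rightarrow> real. continuous_map X (top_of_set {0..1}) f \<and> f x \<noteq> f y))"

end

theory Submission
  imports Defs
begin

(* Let e be an open left unit and V a neighbourhood of e. Openness of e makes the sets V x a
   neighbourhood base at x, and continuity of left translations gives V (cl A) \<subseteq> cl (V A).
   Call A well inside B if cl (V (cl A)) \<subseteq> B for some such V. Then cl A \<subseteq> int B, and since
   continuity of the multiplication at (e, e) yields W with W W \<subseteq> V, the relation interpolates:
   A is well inside cl (W (cl A)), which is well inside B. Interpolating between {x} and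
   cl (V x) along the dyadic rationals gives a Urysohn function for x and cl (V x); so regularity
   gives complete regularity and the Hausdorff property gives functional Hausdorffness. The same
   trick gives cl (W x) \<subseteq> int cl (V x), which upgrades semiregularity and the semi-Hausdorff
   property. An open right unit is an open left unit of the opposite multiplication. *)

section \<open>Separation axioms in arbitrary spaces\<close>

lemma nbhd_imp_subset_topspace: "nbhd X x U \<Longrightarrow> U \<subseteq> topspace X"
  by (simp add: nbhd_def)

lemma nbhd_openin: "openin X U \<Longrightarrow> x \<in> U \<Longrightarrow> nbhd X x U"
  by (simp add: nbhd_def openin_subset interior_of_openin)

lemma completely_regular_imp_regular_sp:
  assumes "completely_regular_sp X"
  shows "regular_sp X"
  unfolding regular_sp_def
proof (intro allI impI)
  fix x W
  assume "x \<in> topspace X" "nbhd X x W"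
  then obtain f :: "'a \<Rightarrow> real" where f: "continuous_map X (top_of_set {0..1}) f" "f x = 0"
    and fW: "{y \<in> topspace X. f y \<in> {0..<1}} \<subseteq> W"
    using assms unfolding completely_regular_sp_def by blast
  have cont: "continuous_map X euclideanreal f" and f01: "\<And>y. y \<in> topspace X \<Longrightarrow> f y \<in> {0..1}"
    using f(1) by (auto simp: continuous_map_in_subtopology)
  define U where "U = {y \<in> topspace X. f y \<in> {..<1/2}}"
  have "openin X U"
    unfolding U_def using cont by (rule openin_continuous_map_preimage) simp
  then have "nbhd X x U"
    using \<open>x \<in> topspace X\<close> f(2) by (auto simp: U_def intro: nbhd_openin)
  have "closedin X {y \<in> topspace X. f y \<in> {..1/2}}"
    using cont by (rule closedin_continuous_map_preimage) simp
  then have "X closure_of U \<subseteq> {y \<in> topspace X. f y \<in> {..1/2}}"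
    by (rule closure_of_minimal[rotated]) (auto simp: U_def)
  also have "\<dots> \<subseteq> W"
    using fW f01 by force
  finally show "\<exists>U. nbhd X x U \<and> X closure_of U \<subseteq> W"
    using \<open>nbhd X x U\<close> by blast
qed

lemma regular_imp_semiregular_sp: "regular_sp X \<Longrightarrow> semiregular_sp X"
  unfolding regular_sp_def semiregular_sp_def by (meson interior_of_subset order_trans)

lemma functionally_hausdorff_imp_hausdorff_sp:
  assumes "functionally_hausdorff_sp X"
  shows "hausdorff_sp X"
  unfolding hausdorff_sp_def
proof (intro ballI impI)
  fix x y
  assume "x \<in> topspace X" "y \<in> topspace X" "x \<noteq> y"
  then obtain f :: "'a \<Rightarrow> real" where f: "continuous_map X (top_of_set {0..1}) f" "f x \<noteq> f y"
    using assms unfolding functionally_hausdorff_sp_def by blast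
  have cont: "continuous_map X euclideanreal f"
    using f(1) by (simp add: continuous_map_in_subtopology)
  define d where "d = dist (f x) (f y) / 2"
  have "0 < d"
    using f(2) by (simp add: d_def)
  define U where "U = {z \<in> topspace X. f z \<in> ball (f x) d}"
  have "openin X U"
    unfolding U_def using cont by (rule openin_continuous_map_preimage) simp
  then have "nbhd X x U"
    using \<open>x \<in> topspace X\<close> \<open>0 < d\<close> by (auto simp: U_def intro: nbhd_openin)
  have "closedin X {z \<in> topspace X. f z \<in> cball (f x) d}"
    using cont by (rule closedin_continuous_map_preimage) simp
  then have "X closure_of U \<subseteq> {z \<in> topspace X. f z \<in> cball (f x) d}"
    by (rule closure_of_minimal[rotated]) (auto simp: U_def)
  moreover have "y \<notin> {z \<in> topspace X. f z \<in> cball (f x) d}"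
    using \<open>0 < d\<close> by (simp add: d_def)
  ultimately show "\<exists>U. nbhd X x U \<and> y \<notin> X closure_of U"
    using \<open>nbhd X x U\<close> by blast
qed

lemma hausdorff_imp_semi_hausdorff_sp: "hausdorff_sp X \<Longrightarrow> semi_hausdorff_sp X"
  unfolding hausdorff_sp_def semi_hausdorff_sp_def by (meson interior_of_subset subsetD)

section \<open>Urysohn functions of dyadic chains\<close>

lemma zero_one_in_dyadics: "(0::real) \<in> dyadics" "(1::real) \<in> dyadics"
  using real_in_dyadics[of 0] real_in_dyadics[of 1] by simp_all

lemma dyadic_between:
  fixes a b :: real
  assumes "0 \<le> a" "a < b"
  obtains r where "r \<in> dyadics" "a < r" "r < b"
proof -
  have "closure ({a<..<b} \<inter> (\<Union>k m. {real m / 2^k})) = closure {a<..<b}"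
    using assms by (intro closure_dyadic_rationals_in_convex_set_pos_1) auto
  then have "{a<..<b} \<inter> dyadics \<noteq> {}"
    using assms by (auto simp: dyadics_def)
  then show thesis
    using that by auto
qed

lemma two_dyadics_between:
  fixes a b :: real
  assumes "0 \<le> a" "a < b" "b \<le> 1"
  shows "\<exists>r \<in> dyadics \<inter> {0..1}. \<exists>s \<in> dyadics \<inter> {0..1}. a < r \<and> r < s \<and> s < b"
proof -
  obtain r where r: "r \<in> dyadics" "a < r" "r < b"
    using assms(1,2) by (rule dyadic_between)
  moreover have "0 \<le> r"
    using assms(1) r(2) by linarith
  ultimately obtain s where s: "s \<in> dyadics" "r < s" "s < b"
    using dyadic_between[of r b] by blast
  show ?thesis
    using r s assms by (intro bexI[of _ r] bexI[of _ s]) auto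
qed

locale dyadic_Urysohn_chain =
  fixes X :: "'a topology" and F :: "real \<Rightarrow> 'a set"
  assumes closure_subset_interior:
    "\<lbrakk>r \<in> dyadics \<inter> {0..1}; s \<in> dyadics \<inter> {0..1}; r < s\<rbrakk> \<Longrightarrow> X closure_of F r \<subseteq> X interior_of F s"
begin

definition level :: "'a \<Rightarrow> real" where
  "level x = Inf (insert 1 {r \<in> dyadics \<inter> {0..1}. x \<in> F r})"

lemma level_le: "r \<in> dyadics \<inter> {0..1} \<Longrightarrow> x \<in> F r \<Longrightarrow> level x \<le> r"
  unfolding level_def by (intro cInf_lower bdd_belowI[of _ 0]) auto

lemma level_le_1: "level x \<le> 1"
  unfolding level_def by (intro cInf_lower bdd_belowI[of _ 0]) auto

lemma level_nonneg: "0 \<le> level x"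
  unfolding level_def by (intro cInf_greatest) auto

lemma le_level:
  assumes r: "r \<in> dyadics \<inter> {0..1}" and x: "x \<in> topspace X" "x \<notin> F r"
  shows "r \<le> level x"
proof -
  have "r \<le> s" if s: "s \<in> dyadics \<inter> {0..1}" "x \<in> F s" for s
  proof (rule ccontr)
    assume "\<not> r \<le> s"
    have "x \<in> X closure_of F s"
      using x(1) s(2) closure_of_subset_Int by fastforce
    also have "\<dots> \<subseteq> X interior_of F r"
      using closure_subset_interior s(1) r \<open>\<not> r \<le> s\<close> by simp
    also have "\<dots> \<subseteq> F r"
      by (rule interior_of_subset)
    finally show False
      using x(2) by contradiction
  qed
  with r show ?thesis
    unfolding level_def by (intro cInf_greatest) auto
qed

lemma mem_of_level_less: "\<lbrakk>r \<in> dyadics \<inter> {0..1}; x \<in> topspace X; level x < r\<rbrakk> \<Longrightarrow> x \<in> F r"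
  using le_level by (meson not_le)

lemma level_less_eq_Union:
  assumes "a \<le> 1"
  shows "{x \<in> topspace X. level x < a} =
         topspace X \<inter> (\<Union>r \<in> {r \<in> dyadics \<inter> {0..1}. r < a}. X interior_of F r)"
proof (intro set_eqI iffI)
  fix x
  assume "x \<in> {x \<in> topspace X. level x < a}"
  then have x: "x \<in> topspace X" "level x < a"
    by simp_all
  then obtain r s where r: "r \<in> dyadics \<inter> {0..1}" "level x < r"
    and s: "s \<in> dyadics \<inter> {0..1}" "r < s" "s < a"
    using two_dyadics_between[of "level x" a] level_nonneg \<open>a \<le> 1\<close> by blast
  have "x \<in> X closure_of F r"
    using mem_of_level_less[OF r(1) x(1) r(2)] x(1) closure_of_subset_Int by fastforce
  also have "\<dots> \<subseteq> X interior_of F s"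
    using closure_subset_interior r(1) s(1,2) .
  finally show "x \<in> topspace X \<inter> (\<Union>r \<in> {r \<in> dyadics \<inter> {0..1}. r < a}. X interior_of F r)"
    using x(1) s by blast
next
  fix x
  assume "x \<in> topspace X \<inter> (\<Union>r \<in> {r \<in> dyadics \<inter> {0..1}. r < a}. X interior_of F r)"
  then obtain r where "x \<in> topspace X" "r \<in> dyadics \<inter> {0..1}" "r < a" "x \<in> X interior_of F r"
    by blast
  then show "x \<in> {x \<in> topspace X. level x < a}"
    using level_le interior_of_subset by fastforce
qed

lemma less_level_eq_Union:
  assumes "0 \<le> a"
  shows "{x \<in> topspace X. a < level x} =
         (\<Union>r \<in> {r \<in> dyadics \<inter> {0..1}. a < r}. topspace X - X closure_of F r)"
proof (intro set_eqI iffI)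
  fix x
  assume "x \<in> {x \<in> topspace X. a < level x}"
  then have x: "x \<in> topspace X" "a < level x"
    by simp_all
  then obtain r s where r: "r \<in> dyadics \<inter> {0..1}" "a < r"
    and s: "s \<in> dyadics \<inter> {0..1}" "r < s" "s < level x"
    using two_dyadics_between[of a "level x"] level_le_1 \<open>0 \<le> a\<close> by blast
  have "x \<notin> X interior_of F s"
    using level_le[OF s(1)] s(3) interior_of_subset by fastforce
  moreover have "X closure_of F r \<subseteq> X interior_of F s"
    using closure_subset_interior r(1) s(1,2) .
  ultimately show "x \<in> (\<Union>r \<in> {r \<in> dyadics \<inter> {0..1}. a < r}. topspace X - X closure_of F r)"
    using x(1) r by blast
next
  fix x
  assume "x \<in> (\<Union>r \<in> {r \<in> dyadics \<inter> {0..1}. a < r}. topspace X - X closure_of F r)"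
  then obtain r where "x \<in> topspace X" "r \<in> dyadics \<inter> {0..1}" "a < r" "x \<notin> X closure_of F r"
    by blast
  then show "x \<in> {x \<in> topspace X. a < level x}"
    using le_level closure_of_subset_Int by fastforce
qed

lemma openin_level_less: "openin X {x \<in> topspace X. level x < a}"
proof (cases "a \<le> 1")
  case True
  then show ?thesis
    unfolding level_less_eq_Union[OF True] by (auto intro!: openin_Int openin_Union)
next
  case False
  then have "{x \<in> topspace X. level x < a} = topspace X"
    using level_le_1 by (auto simp: not_le intro: order.strict_trans1)
  then show ?thesis
    by simp
qed

lemma openin_less_level: "openin X {x \<in> topspace X. a < level x}"
proof (cases "0 \<le> a")
  case True
  have "openin X (\<Union>r \<in> {r \<in> dyadics \<inter> {0..1}. a < r}. topspace X - X closure_of F r)"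
    by (intro openin_Union) (auto intro: openin_diff)
  then show ?thesis
    unfolding less_level_eq_Union[OF True] .
next
  case False
  then have "{x \<in> topspace X. a < level x} = topspace X"
    using level_nonneg by (auto simp: not_le intro: order.strict_trans2)
  then show ?thesis
    by simp
qed

lemma continuous_map_level: "continuous_map X (top_of_set {0..1}) level"
  using level_nonneg level_le_1 openin_level_less openin_less_level
  by (simp add: continuous_map_upper_lower_semicontinuous_lt_gen)

end

section \<open>Topological semigroups with an open left unit\<close>

definition set_mult :: "('a \<Rightarrow> 'a \<Rightarrow> 'a) \<Rightarrow> 'a set \<Rightarrow> 'a set \<Rightarrow> 'a set" where
  "set_mult m A B = {m a b | a b. a \<in> A \<and> b \<in> B}"

lemma set_mult_mono: "A \<subseteq> A' \<Longrightarrow> B \<subseteq> B' \<Longrightarrow> set_mult m A B \<subseteq> set_mult m A' B'"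
  unfolding set_mult_def by blast

lemma set_mult_singleton: "set_mult m A {x} = (\<lambda>a. m a x) ` A"
  unfolding set_mult_def by blast

locale semigroup_open_left_unit =
  fixes X :: "'a topology" and m :: "'a \<Rightarrow> 'a \<Rightarrow> 'a" and e :: 'a
  assumes semigroup: "topological_semigroup X m"
    and open_unit: "open_left_unit X m e"
begin

lemma mult_in_topspace: "x \<in> topspace X \<Longrightarrow> y \<in> topspace X \<Longrightarrow> m x y \<in> topspace X"
  using semigroup by (simp add: topological_semigroup_def)

lemma mult_assoc:
  "\<lbrakk>x \<in> topspace X; y \<in> topspace X; z \<in> topspace X\<rbrakk> \<Longrightarrow> m (m x y) z = m x (m y z)"
  using semigroup by (simp add: topological_semigroup_def)

lemma continuous_map_mult: "continuous_map (prod_topology X X) X (\<lambda>p. m (fst p) (snd p))"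
  using semigroup by (simp add: topological_semigroup_def)

lemma unit_in_topspace: "e \<in> topspace X"
  and mult_unit_left: "x \<in> topspace X \<Longrightarrow> m e x = x"
  using open_unit by (simp_all add: open_left_unit_def left_unit_def)

lemma nbhd_set_mult_singleton: "nbhd X e V \<Longrightarrow> x \<in> topspace X \<Longrightarrow> nbhd X x (set_mult m V {x})"
  using open_unit by (simp add: open_left_unit_def set_mult_singleton)

lemma continuous_map_mult_left: "v \<in> topspace X \<Longrightarrow> continuous_map X X (m v)"
  using continuous_map_compose[OF continuous_map_pairedI continuous_map_mult, of X "\<lambda>_. v" id]
  by (simp add: o_def)

lemma continuous_map_mult_right: "x \<in> topspace X \<Longrightarrow> continuous_map X X (\<lambda>u. m u x)"
  using continuous_map_compose[OF continuous_map_pairedI continuous_map_mult, of X id "\<lambda>_. x"]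
  by (simp add: o_def)

lemma set_mult_subset_topspace:
  "A \<subseteq> topspace X \<Longrightarrow> B \<subseteq> topspace X \<Longrightarrow> set_mult m A B \<subseteq> topspace X"
  unfolding set_mult_def using mult_in_topspace by blast

lemma set_mult_assoc_subset:
  assumes "A \<subseteq> topspace X" "B \<subseteq> topspace X" "C \<subseteq> topspace X"
  shows "set_mult m A (set_mult m B C) \<subseteq> set_mult m (set_mult m A B) C"
proof
  fix z
  assume "z \<in> set_mult m A (set_mult m B C)"
  then obtain a b c where z: "z = m a (m b c)" and abc: "a \<in> A" "b \<in> B" "c \<in> C"
    unfolding set_mult_def by blast
  then have "z = m (m a b) c"
    using assms by (auto intro: mult_assoc[symmetric])
  with abc show "z \<in> set_mult m (set_mult m A B) C"
    unfolding set_mult_def by blast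
qed

lemma set_mult_closure_of_subset:
  assumes "A \<subseteq> topspace X"
  shows "set_mult m A (X closure_of B) \<subseteq> X closure_of (set_mult m A B)"
proof
  fix z
  assume "z \<in> set_mult m A (X closure_of B)"
  then obtain a b where z: "z = m a b" "a \<in> A" "b \<in> X closure_of B"
    unfolding set_mult_def by blast
  have "z \<in> m a ` (X closure_of B)"
    using z(1,3) by simp
  also have "\<dots> \<subseteq> X closure_of (m a ` B)"
    using assms z(2) by (intro continuous_map_image_closure_subset continuous_map_mult_left) blast
  also have "\<dots> \<subseteq> X closure_of (set_mult m A B)"
    using z(2) by (intro closure_of_mono) (auto simp: set_mult_def)
  finally show "z \<in> X closure_of (set_mult m A B)" .
qed

lemma subset_interior_of_set_mult:
  assumes "nbhd X e V" "B \<subseteq> topspace X"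
  shows "B \<subseteq> X interior_of (set_mult m V B)"
proof
  fix b
  assume "b \<in> B"
  then have "nbhd X b (set_mult m V {b})"
    using assms by (intro nbhd_set_mult_singleton) auto
  then have "b \<in> X interior_of (set_mult m V {b})"
    by (simp add: nbhd_def)
  also have "\<dots> \<subseteq> X interior_of (set_mult m V B)"
    using \<open>b \<in> B\<close> by (intro interior_of_mono set_mult_mono) auto
  finally show "b \<in> X interior_of (set_mult m V B)" .
qed

lemma nbhd_unit_square_subset:
  assumes "nbhd X e V"
  obtains W where "nbhd X e W" "set_mult m W W \<subseteq> V"
proof -
  let ?P = "{p \<in> topspace (prod_topology X X). m (fst p) (snd p) \<in> X interior_of V}"
  have "openin (prod_topology X X) ?P"
    using continuous_map_mult by (rule openin_continuous_map_preimage) simp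
  moreover have "(e, e) \<in> ?P"
    using assms unit_in_topspace mult_unit_left[OF unit_in_topspace] by (simp add: nbhd_def)
  ultimately obtain U1 U2 where U: "openin X U1" "openin X U2" "e \<in> U1" "e \<in> U2" "U1 \<times> U2 \<subseteq> ?P"
    unfolding openin_prod_topology_alt by meson
  show thesis
  proof
    show "nbhd X e (U1 \<inter> U2)"
      using U by (intro nbhd_openin) auto
    show "set_mult m (U1 \<inter> U2) (U1 \<inter> U2) \<subseteq> V"
    proof
      fix z
      assume "z \<in> set_mult m (U1 \<inter> U2) (U1 \<inter> U2)"
      then obtain u v where z: "z = m u v" "u \<in> U1" "v \<in> U2"
        unfolding set_mult_def by blast
      then have "(u, v) \<in> ?P"
        by (intro subsetD[OF U(5)]) simp
      then have "z \<in> X interior_of V"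
        using z(1) by simp
      then show "z \<in> V"
        by (rule subsetD[OF interior_of_subset])
    qed
  qed
qed

lemma nbhd_unit_mult_subset:
  assumes "x \<in> topspace X" "nbhd X x Q"
  obtains V where "nbhd X e V" "set_mult m V {x} \<subseteq> Q"
proof
  let ?V = "{u \<in> topspace X. m u x \<in> X interior_of Q}"
  have "openin X ?V"
    using continuous_map_mult_right[OF assms(1)] by (rule openin_continuous_map_preimage) simp
  then show "nbhd X e ?V"
    using assms unit_in_topspace mult_unit_left by (intro nbhd_openin) (auto simp: nbhd_def)
  show "set_mult m ?V {x} \<subseteq> Q"
    using interior_of_subset[of X Q] by (auto simp: set_mult_def)
qed

lemma nbhd_closure_subset_interior_closure:
  assumes x: "x \<in> topspace X" and "nbhd X x Q"
  obtains U where "nbhd X x U" "X closure_of U \<subseteq> X interior_of (X closure_of Q)"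
proof -
  obtain V where V: "nbhd X e V" "set_mult m V {x} \<subseteq> Q"
    using nbhd_unit_mult_subset[OF assms] by blast
  obtain W where W: "nbhd X e W" "set_mult m W W \<subseteq> V"
    using nbhd_unit_square_subset[OF V(1)] by blast
  have WX: "W \<subseteq> topspace X"
    using W(1) by (rule nbhd_imp_subset_topspace)
  define U where "U = set_mult m W {x}"
  have "nbhd X x U"
    unfolding U_def using W(1) x by (rule nbhd_set_mult_singleton)
  have "set_mult m W U \<subseteq> set_mult m (set_mult m W W) {x}"
    unfolding U_def using WX x by (intro set_mult_assoc_subset) auto
  also have "\<dots> \<subseteq> Q"
    using W(2) V(2) set_mult_mono[of "set_mult m W W" V "{x}" "{x}" m] by blast
  finally have "set_mult m W U \<subseteq> Q" .
  have "X closure_of U \<subseteq> X interior_of (set_mult m W (X closure_of U))"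
    using W(1) closure_of_subset_topspace by (rule subset_interior_of_set_mult)
  also have "\<dots> \<subseteq> X interior_of (X closure_of (set_mult m W U))"
    using WX by (intro interior_of_mono set_mult_closure_of_subset)
  also have "\<dots> \<subseteq> X interior_of (X closure_of Q)"
    using \<open>set_mult m W U \<subseteq> Q\<close> by (intro interior_of_mono closure_of_mono)
  finally show thesis
    using \<open>nbhd X x U\<close> that by blast
qed

definition well_inside :: "'a set \<Rightarrow> 'a set \<Rightarrow> bool" where
  "well_inside A B \<longleftrightarrow> (\<exists>V. nbhd X e V \<and> X closure_of (set_mult m V (X closure_of A)) \<subseteq> B)"

lemma well_inside_imp_closure_subset_interior:
  assumes "well_inside A B"
  shows "X closure_of A \<subseteq> X interior_of B"
proof -
  obtain V where V: "nbhd X e V" "X closure_of (set_mult m V (X closure_of A)) \<subseteq> B"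
    using assms unfolding well_inside_def by blast
  have "X closure_of A \<subseteq> X interior_of (set_mult m V (X closure_of A))"
    using V(1) closure_of_subset_topspace by (rule subset_interior_of_set_mult)
  also have "\<dots> \<subseteq> X interior_of (X closure_of (set_mult m V (X closure_of A)))"
    using nbhd_imp_subset_topspace[OF V(1)]
    by (intro interior_of_mono closure_of_subset set_mult_subset_topspace closure_of_subset_topspace)
  also have "\<dots> \<subseteq> X interior_of B"
    using V(2) by (rule interior_of_mono)
  finally show ?thesis .
qed

lemma well_inside_trans:
  assumes "well_inside A B" "well_inside B C"
  shows "well_inside A C"
proof -
  obtain V where V: "nbhd X e V" "X closure_of (set_mult m V (X closure_of A)) \<subseteq> B"
    using assms(1) unfolding well_inside_def by blast
  have "X closure_of (set_mult m V (X closure_of A)) \<subseteq> topspace X \<inter> B"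
    by (intro Int_greatest closure_of_subset_topspace V(2))
  also have "\<dots> \<subseteq> X closure_of B"
    by (rule closure_of_subset_Int)
  also have "\<dots> \<subseteq> X interior_of C"
    using assms(2) by (rule well_inside_imp_closure_subset_interior)
  also have "\<dots> \<subseteq> C"
    by (rule interior_of_subset)
  finally show ?thesis
    using V(1) unfolding well_inside_def by blast
qed

lemma well_inside_interpolate:
  assumes "well_inside A B"
  obtains Z where "well_inside A Z" "well_inside Z B"
proof -
  obtain V where V: "nbhd X e V" "X closure_of (set_mult m V (X closure_of A)) \<subseteq> B"
    using assms unfolding well_inside_def by blast
  obtain W where W: "nbhd X e W" "set_mult m W W \<subseteq> V"
    using nbhd_unit_square_subset[OF V(1)] by blast
  have WX: "W \<subseteq> topspace X"
    using W(1) by (rule nbhd_imp_subset_topspace)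
  define Z where "Z = X closure_of (set_mult m W (X closure_of A))"
  have "well_inside A Z"
    using W(1) unfolding well_inside_def Z_def by blast
  have "set_mult m W Z \<subseteq> X closure_of (set_mult m W (set_mult m W (X closure_of A)))"
    unfolding Z_def using WX by (rule set_mult_closure_of_subset)
  also have "\<dots> \<subseteq> X closure_of (set_mult m (set_mult m W W) (X closure_of A))"
    by (intro closure_of_mono set_mult_assoc_subset WX closure_of_subset_topspace)
  also have "\<dots> \<subseteq> X closure_of (set_mult m V (X closure_of A))"
    by (intro closure_of_mono set_mult_mono W(2) order_refl)
  finally have "X closure_of (set_mult m W Z) \<subseteq> X closure_of (set_mult m V (X closure_of A))"
    by (metis closure_of_closure_of closure_of_mono)
  then have "well_inside Z B"
    using W(1) V(2) unfolding well_inside_def Z_def closure_of_closure_of by blast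
  with \<open>well_inside A Z\<close> show thesis
    by (rule that)
qed

lemma Urysohn_function_nbhd:
  assumes x: "x \<in> topspace X" and V: "nbhd X e V"
  obtains f :: "'a \<Rightarrow> real" where "continuous_map X (top_of_set {0..1}) f" "f x = 0"
    "\<And>y. \<lbrakk>y \<in> topspace X; f y < 1\<rbrakk> \<Longrightarrow> y \<in> X closure_of (set_mult m V {x})"
proof -
  have "set_mult m V (X closure_of {x}) \<subseteq> X closure_of (set_mult m V {x})"
    using nbhd_imp_subset_topspace[OF V] by (rule set_mult_closure_of_subset)
  then have "X closure_of (set_mult m V (X closure_of {x})) \<subseteq> X closure_of (set_mult m V {x})"
    using closedin_closure_of by (rule closure_of_minimal)
  with V have "well_inside {x} (X closure_of (set_mult m V {x}))"
    unfolding well_inside_def by blast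
  then have "\<exists>F :: real \<Rightarrow> 'a set. F 0 = {x} \<and> F 1 = X closure_of (set_mult m V {x}) \<and>
      (\<forall>r \<in> dyadics \<inter> {0..1}. \<forall>s \<in> dyadics \<inter> {0..1}. r < s \<longrightarrow> well_inside (F r) (F s))"
  proof (rule recursion_on_dyadic_fractions)
    show "\<exists>Z. well_inside A Z \<and> well_inside Z B" if "well_inside A B" for A B
      using well_inside_interpolate[OF that] by blast
    show "well_inside A C" if "well_inside A B" "well_inside B C" for A B C
      using that by (rule well_inside_trans)
  qed
  then obtain F :: "real \<Rightarrow> 'a set" where F: "F 0 = {x}" "F 1 = X closure_of (set_mult m V {x})"
    and F_well_inside: "\<forall>r \<in> dyadics \<inter> {0..1}. \<forall>s \<in> dyadics \<inter> {0..1}. r < s \<longrightarrow> well_inside (F r) (F s)"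
    by blast
  have "dyadic_Urysohn_chain X F"
  proof
    fix r s :: real
    assume "r \<in> dyadics \<inter> {0..1}" "s \<in> dyadics \<inter> {0..1}" "r < s"
    with F_well_inside show "X closure_of F r \<subseteq> X interior_of F s"
      by (intro well_inside_imp_closure_subset_interior) blast
  qed
  then interpret chain: dyadic_Urysohn_chain X F .
  show thesis
  proof (rule that)
    show "continuous_map X (top_of_set {0..1}) chain.level"
      by (rule chain.continuous_map_level)
    show "chain.level x = 0"
      using chain.level_le[of 0 x] chain.level_nonneg[of x] F(1) zero_one_in_dyadics by simp
    show "y \<in> X closure_of (set_mult m V {x})" if "y \<in> topspace X" "chain.level y < 1" for y
      using chain.mem_of_level_less[of 1 y] that F(2) zero_one_in_dyadics by simp
  qed
qed

lemma semiregular_imp_regular_sp: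
  assumes "semiregular_sp X"
  shows "regular_sp X"
  unfolding regular_sp_def
proof (intro allI impI)
  fix x W
  assume "x \<in> topspace X" "nbhd X x W"
  then obtain Q where Q: "nbhd X x Q" "X interior_of (X closure_of Q) \<subseteq> W"
    using assms unfolding semiregular_sp_def by blast
  obtain U where U: "nbhd X x U" "X closure_of U \<subseteq> X interior_of (X closure_of Q)"
    using nbhd_closure_subset_interior_closure[OF \<open>x \<in> topspace X\<close> Q(1)] by blast
  have "X closure_of U \<subseteq> W"
    using U(2) Q(2) by (rule order_trans)
  with U(1) show "\<exists>U. nbhd X x U \<and> X closure_of U \<subseteq> W"
    by blast
qed

lemma semi_hausdorff_imp_hausdorff_sp:
  assumes "semi_hausdorff_sp X"
  shows "hausdorff_sp X"
  unfolding hausdorff_sp_def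
proof (intro ballI impI)
  fix x y
  assume "x \<in> topspace X" "y \<in> topspace X" "x \<noteq> y"
  then obtain Q where Q: "nbhd X x Q" "y \<notin> X interior_of (X closure_of Q)"
    using assms unfolding semi_hausdorff_sp_def by blast
  obtain U where U: "nbhd X x U" "X closure_of U \<subseteq> X interior_of (X closure_of Q)"
    using nbhd_closure_subset_interior_closure[OF \<open>x \<in> topspace X\<close> Q(1)] by blast
  have "y \<notin> X closure_of U"
    using U(2) Q(2) by blast
  with U(1) show "\<exists>U. nbhd X x U \<and> y \<notin> X closure_of U"
    by blast
qed

lemma regular_imp_completely_regular_sp:
  assumes "regular_sp X"
  shows "completely_regular_sp X"
  unfolding completely_regular_sp_def
proof (intro allI impI)
  fix x W
  assume x: "x \<in> topspace X" and "nbhd X x W"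
  then obtain Q where Q: "nbhd X x Q" "X closure_of Q \<subseteq> W"
    using assms unfolding regular_sp_def by blast
  obtain V where V: "nbhd X e V" "set_mult m V {x} \<subseteq> Q"
    using nbhd_unit_mult_subset[OF x Q(1)] by blast
  obtain f :: "'a \<Rightarrow> real" where f: "continuous_map X (top_of_set {0..1}) f" "f x = 0"
    and f_lt1: "\<And>y. \<lbrakk>y \<in> topspace X; f y < 1\<rbrakk> \<Longrightarrow> y \<in> X closure_of (set_mult m V {x})"
    using Urysohn_function_nbhd[OF x V(1)] by blast
  have "X closure_of (set_mult m V {x}) \<subseteq> W"
    using closure_of_mono[OF V(2)] Q(2) by (rule order_trans)
  then have "{y \<in> topspace X. f y \<in> {0..<1}} \<subseteq> W"
    using f_lt1 by auto
  with f show "\<exists>f :: 'a \<Rightarrow> real. continuous_map X (top_of_set {0..1}) f \<and> f x = 0 \<and>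
      {y \<in> topspace X. f y \<in> {0..<1}} \<subseteq> W"
    by blast
qed

lemma hausdorff_imp_functionally_hausdorff_sp:
  assumes "hausdorff_sp X"
  shows "functionally_hausdorff_sp X"
  unfolding functionally_hausdorff_sp_def
proof (intro ballI impI)
  fix x y
  assume x: "x \<in> topspace X" and y: "y \<in> topspace X" and "x \<noteq> y"
  then obtain Q where Q: "nbhd X x Q" "y \<notin> X closure_of Q"
    using assms unfolding hausdorff_sp_def by blast
  obtain V where V: "nbhd X e V" "set_mult m V {x} \<subseteq> Q"
    using nbhd_unit_mult_subset[OF x Q(1)] by blast
  obtain f :: "'a \<Rightarrow> real" where f: "continuous_map X (top_of_set {0..1}) f" "f x = 0"
    and f_lt1: "\<And>y. \<lbrakk>y \<in> topspace X; f y < 1\<rbrakk> \<Longrightarrow> y \<in> X closure_of (set_mult m V {x})"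
    using Urysohn_function_nbhd[OF x V(1)] by blast
  have "y \<notin> X closure_of (set_mult m V {x})"
    using closure_of_mono[OF V(2)] Q(2) by blast
  then have "f x \<noteq> f y"
    using f_lt1 y f(2) by force
  with f(1) show "\<exists>f :: 'a \<Rightarrow> real. continuous_map X (top_of_set {0..1}) f \<and> f x \<noteq> f y"
    by blast
qed

lemma separation_axioms_equivalent:
  "(completely_regular_sp X \<longleftrightarrow> regular_sp X) \<and> (regular_sp X \<longleftrightarrow> semiregular_sp X) \<and>
   (functionally_hausdorff_sp X \<longleftrightarrow> hausdorff_sp X) \<and> (hausdorff_sp X \<longleftrightarrow> semi_hausdorff_sp X)"
  using completely_regular_imp_regular_sp regular_imp_completely_regular_sp
    regular_imp_semiregular_sp semiregular_imp_regular_sp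
    functionally_hausdorff_imp_hausdorff_sp hausdorff_imp_functionally_hausdorff_sp
    hausdorff_imp_semi_hausdorff_sp semi_hausdorff_imp_hausdorff_sp
  by blast

end

lemma topological_semigroup_opposite:
  assumes "topological_semigroup X m"
  shows "topological_semigroup X (\<lambda>x y. m y x)"
proof -
  have "continuous_map (prod_topology X X) X (\<lambda>p. m (fst p) (snd p))"
    using assms by (simp add: topological_semigroup_def)
  then have "continuous_map (prod_topology X X) X (\<lambda>p. m (snd p) (fst p))"
    using continuous_map_compose[OF continuous_map_pairedI[OF continuous_map_snd continuous_map_fst]]
    by (fastforce simp: o_def)
  then show ?thesis
    using assms unfolding topological_semigroup_def by simp
qed

lemma open_right_unit_imp_open_left_unit_opposite:
  "open_right_unit X m e \<Longrightarrow> open_left_unit X (\<lambda>x y. m y x) e"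
  unfolding open_right_unit_def open_left_unit_def right_unit_def left_unit_def by simp

theorem corollary5p5:
  fixes X :: "'a topology" and m :: "'a \<Rightarrow> 'a \<Rightarrow> 'a"
  assumes "topological_semigroup X m"
    and "(\<exists>e. open_left_unit X m e) \<or> (\<exists>e. open_right_unit X m e)"
  shows "(completely_regular_sp X \<longleftrightarrow> regular_sp X) \<and> (regular_sp X \<longleftrightarrow> semiregular_sp X) \<and>
         (functionally_hausdorff_sp X \<longleftrightarrow> hausdorff_sp X) \<and> (hausdorff_sp X \<longleftrightarrow> semi_hausdorff_sp X)"
  using assms(2)
proof
  assume "\<exists>e. open_left_unit X m e"
  then obtain e where "open_left_unit X m e" ..
  with assms(1) have "semigroup_open_left_unit X m e"
    by (rule semigroup_open_left_unit.intro)
  then show ?thesis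
    by (rule semigroup_open_left_unit.separation_axioms_equivalent)
next
  assume "\<exists>e. open_right_unit X m e"
  then obtain e where "open_right_unit X m e" ..
  then have "open_left_unit X (\<lambda>x y. m y x) e"
    by (rule open_right_unit_imp_open_left_unit_opposite)
  with topological_semigroup_opposite[OF assms(1)]
  have "semigroup_open_left_unit X (\<lambda>x y. m y x) e"
    by (rule semigroup_open_left_unit.intro)
  then show ?thesis
    by (rule semigroup_open_left_unit.separation_axioms_equivalent)
qed

end
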